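(* Applying a normalisation rule (NR1 or NR2) to a TDD does not change the tensor it represents. Moreover, a TDD is normal if and only if no normalisation rule is applicable to it.
   Context: Fix a finite index set $I$ with a linear order $\prec$. Indices take values in $\{0,1\}$; a tensor over $I$ is a map $\{0,1\}^I\to\mathbb{C}$ (tensors over subsets of $I$ are regarded as tensors over $I$ not depending on the other indices). Each index $x$ is regarded as the tensor $x(c)=c$, and $\overline{x}(c):=1-c$; operations on tensors are pointwise. A TDD over $I$ is $\mathcal F=(V,E,index,value,low,high,w)$: a rooted directed acyclic graph with finite node set $V$ partitioned into non-terminal nodes $V_N$ and terminal nodes $V_T$, root $r_{\mathcal F}$; $index:V_N\to I$; $value:V_T\to\mathbb{C}$; $low,high:V_N\to V$; edges are the low-edges $(v,low(v))$ and high-edges $(v,high(v))$, $v\in V_N$, plus a unique source-less incoming edge $e_r$ of the root; $w$ gives each edge a complex weight and $w_{\mathcal F}:=w(e_r)$. Node tensors: $\Phi(v)=value(v)$ for terminal $v$; otherwise $\Phi(v)=w_0\overline{x_v}\Phi(low(v))+w_1x_v\Phi(high(v))$ with $x_v=index(v)$ and $w_0,w_1$ the low-/high-edge weights. The TDD represents $\Phi(\mathcal F):=w_{\mathcal F}\Phi(r_{\mathcal F})$. Normality (w.r.t. $\prec$): the pivot of a tensor $\phi$ is the lexicographically smallest (compare at the $\prec$-smallest differing index, $0<1$) $\vec a$ with $|\phi(\vec a)|=\max_{\vec b}|\phi(\vec b)|$; $\phi$ is normal if $\phi=0$ or $\phi$ equals $1$ at its pivot. A TDD is normal if $\Phi(v)$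 is normal for every node $v$. Normalisation rules. NR1: if $v$ is a terminal node with $value(v)\neq0$ and $value(v)\neq1$, set its value to $1$ and replace the weight $w$ of each incoming edge of $v$ by $value(v)\cdot w$. NR2: let $v$ be a non-terminal node such that $\Phi(v)\neq0$ is not normal but $\Phi(low(v))$ and $\Phi(high(v))$ are both normal, with low-/high-edge weights $w_0,w_1$. If $\Phi(low(v))\neq0$ and either $\Phi(high(v))=0$ or $|w_0|\ge|w_1|$, let $w:=w_0$; otherwise let $w:=w_1$. Divide $w_0$ and $w_1$ by $w$ and multiply the weight of each incoming edge of $v$ by $w$. *)

theory Defs
  imports Complex_Main
begin

text \<open>An assignment of values in {0,1} to the indices is a map 'i => bool
 (False = 0, True = 1).
 The finite linearly ordered index set I is the type 'i :: {finite, linorder}.\<close>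

type_synonym 'i tensor = "('i \<Rightarrow> bool) \<Rightarrow> complex"

definition idx_tensor :: "'i \<Rightarrow> 'i tensor" where
  "idx_tensor x = (\<lambda>c. if c x then 1 else 0)"

definition idx_bar_tensor :: "'i \<Rightarrow> 'i tensor" where
  "idx_bar_tensor x = (\<lambda>c. 1 - idx_tensor x c)"

definition lex_less :: "('i::linorder \<Rightarrow> bool) \<Rightarrow> ('i \<Rightarrow> bool) \<Rightarrow> bool" where
  "lex_less a b \<longleftrightarrow> (\<exists>i. \<not> a i \<and> b i \<and> (\<forall>j. j < i \<longrightarrow> a j = b j))"

definition max_abs :: "('i::finite) tensor \<Rightarrow> real" where
  "max_abs \<phi> = Max (range (\<lambda>b. cmod (\<phi> b)))"

definition pivot :: "('i::{finite,linorder}) tensor \<Rightarrow> ('i \<Rightarrow> bool)" where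
  "pivot \<phi> = (THE a. cmod (\<phi> a) = max_abs \<phi> \<and>
       (\<forall>b. cmod (\<phi> b) = max_abs \<phi> \<longrightarrow> b = a \<or> lex_less a b))"

definition normal_tensor :: "('i::{finite,linorder}) tensor \<Rightarrow> bool" where
  "normal_tensor \<phi> \<longleftrightarrow> \<phi> = (\<lambda>_. 0) \<or> \<phi> (pivot \<phi>) = 1"

text \<open>Nodes have type 'v. The low-edge of a non-terminal node v is identified with v
 (weight wlo v), likewise the high-edge (weight whi v); wroot is the weight of the
 source-less root edge.\<close>

record ('i, 'v) tdd =
  nodes :: "'v set"
  terms :: "'v set"
  root  :: 'v
  idx   :: "'v \<Rightarrow> 'i"
  val   :: "'v \<Rightarrow> complex"
  lo    :: "'v \<Rightarrow> 'v"
  hi    :: "'v \<Rightarrow> 'v"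
  wlo   :: "'v \<Rightarrow> complex"
  whi   :: "'v \<Rightarrow> complex"
  wroot :: complex

definition nonterms :: "('i, 'v) tdd \<Rightarrow> 'v set" where
  "nonterms F = nodes F - terms F"

definition edges :: "('i, 'v) tdd \<Rightarrow> ('v \<times> 'v) set" where
  "edges F = {(v, lo F v) | v. v \<in> nonterms F} \<union> {(v, hi F v) | v. v \<in> nonterms F}"

definition wf_tdd :: "('i, 'v) tdd \<Rightarrow> bool" where
  "wf_tdd F \<longleftrightarrow> finite (nodes F) \<and> terms F \<subseteq> nodes F \<and> root F \<in> nodes F
     \<and> (\<forall>v \<in> nonterms F. lo F v \<in> nodes F \<and> hi F v \<in> nodes F)
     \<and> acyclic (edges F)
     \<and> (\<forall>v \<in> nodes F. (root F, v) \<in> (edges F)\<^sup>*)"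

text \<open>Node tensors, computed by unfolding the recursive definition; on an acyclic graph
 with card V nodes every path has fewer than card V edges, so fuel card V suffices.\<close>
primrec phi_fuel :: "nat \<Rightarrow> ('i, 'v) tdd \<Rightarrow> 'v \<Rightarrow> 'i tensor" where
  "phi_fuel 0 F v = (\<lambda>_. val F v)"
| "phi_fuel (Suc n) F v =
     (if v \<in> terms F then (\<lambda>_. val F v)
      else (\<lambda>c. wlo F v * idx_bar_tensor (idx F v) c * phi_fuel n F (lo F v) c
               + whi F v * idx_tensor (idx F v) c * phi_fuel n F (hi F v) c))"

definition node_tensor :: "('i, 'v) tdd \<Rightarrow> 'v \<Rightarrow> 'i tensor" where
  "node_tensor F v = phi_fuel (card (nodes F)) F v"

definition rep :: "('i, 'v) tdd \<Rightarrow> 'i tensor" where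
  "rep F = (\<lambda>c. wroot F * node_tensor F (root F) c)"

definition normal_tdd :: "('i::{finite,linorder}, 'v) tdd \<Rightarrow> bool" where
  "normal_tdd F \<longleftrightarrow> (\<forall>v \<in> nodes F. normal_tensor (node_tensor F v))"

definition nr1_applicable :: "('i, 'v) tdd \<Rightarrow> 'v \<Rightarrow> bool" where
  "nr1_applicable F v \<longleftrightarrow> v \<in> terms F \<and> val F v \<noteq> 0 \<and> val F v \<noteq> 1"

definition nr1 :: "('i, 'v) tdd \<Rightarrow> 'v \<Rightarrow> ('i, 'v) tdd" where
  "nr1 F v = F\<lparr> val := (val F)(v := 1),
     wlo := (\<lambda>u. if u \<in> nonterms F \<and> lo F u = v then val F v * wlo F u else wlo F u),
     whi := (\<lambda>u. if u \<in> nonterms F \<and> hi F u = v then val F v * whi F u else whi F u),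
     wroot := (if root F = v then val F v * wroot F else wroot F) \<rparr>"

definition nr2_applicable :: "('i::{finite,linorder}, 'v) tdd \<Rightarrow> 'v \<Rightarrow> bool" where
  "nr2_applicable F v \<longleftrightarrow> v \<in> nonterms F
     \<and> node_tensor F v \<noteq> (\<lambda>_. 0) \<and> \<not> normal_tensor (node_tensor F v)
     \<and> normal_tensor (node_tensor F (lo F v)) \<and> normal_tensor (node_tensor F (hi F v))"

definition nr2_weight :: "('i, 'v) tdd \<Rightarrow> 'v \<Rightarrow> complex" where
  "nr2_weight F v =
     (if node_tensor F (lo F v) \<noteq> (\<lambda>_. 0) \<and>
         (node_tensor F (hi F v) = (\<lambda>_. 0) \<or> cmod (wlo F v) \<ge> cmod (whi F v))
      then wlo F v else whi F v)"

definition nr2 :: "('i, 'v) tdd \<Rightarrow> 'v \<Rightarrow> ('i, 'v) tdd" where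
  "nr2 F v = (let w = nr2_weight F v in F\<lparr>
     wlo := (\<lambda>u. (if u = v then wlo F u / w else wlo F u)
                 * (if u \<in> nonterms F \<and> lo F u = v then w else 1)),
     whi := (\<lambda>u. (if u = v then whi F u / w else whi F u)
                 * (if u \<in> nonterms F \<and> hi F u = v then w else 1)),
     wroot := (if root F = v then w * wroot F else wroot F) \<rparr>)"

end

theory Submission
  imports Defs
begin

text \<open>Both rules are gauge transformations: for a scale s on the nodes, dividing every node
 tensor \<open>\<Phi>(u)\<close> by s(u) is compensated by multiplying the weights of the edges into u by
 s(u) and dividing those out of u by it. NR1 and NR2 rescale the single node v, by value(v)
 resp. by the chosen weight w, which is nonzero because \<open>\<Phi>(v) \<noteq> 0\<close>. By bottom-up induction
 over the acyclic graph the new node tensors are the rescaled old ones, and the root edge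
 absorbs the scale of the root, so the represented tensor is unchanged. A terminal tensor is
 constant, hence normal iff its value is 0 or 1, i.e. iff NR1 does not apply to it; and if no
 rule applies anywhere, bottom-up induction shows every node normal, since a non-normal node
 with normal children would admit NR2.\<close>

lemma wf_tdd_edges_subset: "wf_tdd F \<Longrightarrow> edges F \<subseteq> nodes F \<times> nodes F"
  unfolding wf_tdd_def edges_def nonterms_def by auto

lemma wf_tdd_wf_converse_edges:
  assumes "wf_tdd F"
  shows "wf ((edges F)\<inverse>)"
proof (rule finite_acyclic_wf_converse)
  have "finite (nodes F \<times> nodes F)"
    using assms unfolding wf_tdd_def by simp
  then show "finite (edges F)"
    using wf_tdd_edges_subset[OF assms] by (rule finite_subset[rotated])
  show "acyclic (edges F)"
    using assms unfolding wf_tdd_def by simp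
qed

lemma lo_in_edges: "u \<in> nonterms F \<Longrightarrow> (u, lo F u) \<in> edges F"
  and hi_in_edges: "u \<in> nonterms F \<Longrightarrow> (u, hi F u) \<in> edges F"
  unfolding edges_def by auto

lemma lo_in_nodes: "wf_tdd F \<Longrightarrow> u \<in> nonterms F \<Longrightarrow> lo F u \<in> nodes F"
  and hi_in_nodes: "wf_tdd F \<Longrightarrow> u \<in> nonterms F \<Longrightarrow> hi F u \<in> nodes F"
  unfolding wf_tdd_def by auto

lemma tdd_node_induct [consumes 2, case_names terminal inner]:
  assumes wf: "wf_tdd F" and u: "u \<in> nodes F"
    and terminal: "\<And>u. u \<in> terms F \<Longrightarrow> P u"
    and inner: "\<And>u. u \<in> nonterms F \<Longrightarrow> P (lo F u) \<Longrightarrow> P (hi F u) \<Longrightarrow> P u"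
  shows "P u"
proof -
  have "u \<in> nodes F \<longrightarrow> P u"
    using wf_tdd_wf_converse_edges[OF wf]
  proof (induction u rule: wf_induct_rule)
    case (less u)
    show ?case
    proof (cases "u \<in> terms F")
      case True
      then show ?thesis by (simp add: terminal)
    next
      case False
      show ?thesis
      proof
        assume "u \<in> nodes F"
        with False have nt: "u \<in> nonterms F"
          unfolding nonterms_def by blast
        have "P (lo F u)" "P (hi F u)"
          using less lo_in_edges[OF nt] hi_in_edges[OF nt]
            lo_in_nodes[OF wf nt] hi_in_nodes[OF wf nt]
          by simp_all
        then show "P u"
          by (rule inner[OF nt])
      qed
    qed
  qed
  with u show ?thesis by blast
qed

definition descendants :: "('i, 'v) tdd \<Rightarrow> 'v \<Rightarrow> 'v set" where
  "descendants F u = (edges F)\<^sup>+ `` {u}"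

lemma descendants_subset_nodes: "wf_tdd F \<Longrightarrow> descendants F u \<subseteq> nodes F"
  unfolding descendants_def
  using trancl_subset_Sigma[OF wf_tdd_edges_subset] by blast

lemma finite_descendants:
  assumes "wf_tdd F"
  shows "finite (descendants F u)"
proof (rule finite_subset[OF descendants_subset_nodes[OF assms]])
  show "finite (nodes F)"
    using assms unfolding wf_tdd_def by simp
qed

lemma not_in_descendants: "wf_tdd F \<Longrightarrow> u \<notin> descendants F u"
  unfolding wf_tdd_def acyclic_def descendants_def by blast

lemma card_descendants_edge_less:
  assumes wf: "wf_tdd F" and e: "(u, c) \<in> edges F"
  shows "card (descendants F c) < card (descendants F u)"
proof (rule psubset_card_mono[OF finite_descendants[OF wf]])
  have "descendants F c \<subseteq> descendants F u"
    using e unfolding descendants_def by (auto intro: trancl_into_trancl2)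
  moreover have "c \<in> descendants F u - descendants F c"
    using e not_in_descendants[OF wf] unfolding descendants_def by blast
  ultimately show "descendants F c \<subset> descendants F u" by blast
qed

lemma card_descendants_less_card_nodes:
  assumes wf: "wf_tdd F" and u: "u \<in> nodes F"
  shows "card (descendants F u) < card (nodes F)"
proof -
  have "descendants F u \<subset> nodes F"
    using descendants_subset_nodes[OF wf] not_in_descendants[OF wf] u by blast
  moreover have "finite (nodes F)"
    using wf unfolding wf_tdd_def by simp
  ultimately show ?thesis
    by (simp add: psubset_card_mono)
qed

lemma phi_fuel_eq_if_descendants_less:
  assumes wf: "wf_tdd F" and u: "u \<in> nodes F"
  shows "card (descendants F u) < n \<Longrightarrow> card (descendants F u) < m
    \<Longrightarrow> phi_fuel n F u = phi_fuel m F u"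
  using wf u
proof (induction u arbitrary: n m rule: tdd_node_induct)
  case (terminal u)
  obtain n' m' where "n = Suc n'" "m = Suc m'"
    using terminal.prems by (metis less_nat_zero_code not0_implies_Suc)
  with terminal.hyps show ?case by simp
next
  case (inner u)
  obtain n' m' where nm: "n = Suc n'" "m = Suc m'"
    using inner.prems by (metis less_nat_zero_code not0_implies_Suc)
  have "card (descendants F c) < n'" "card (descendants F c) < m'"
    if "(u, c) \<in> edges F" for c
    using card_descendants_edge_less[OF wf that] inner.prems nm by simp_all
  then have "phi_fuel n' F (lo F u) = phi_fuel m' F (lo F u)"
    "phi_fuel n' F (hi F u) = phi_fuel m' F (hi F u)"
    using inner.IH lo_in_edges[OF inner.hyps] hi_in_edges[OF inner.hyps] by blast+
  moreover have "u \<notin> terms F"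
    using inner.hyps unfolding nonterms_def by blast
  ultimately show ?case using nm by simp
qed

lemma node_tensor_terminal:
  assumes wf: "wf_tdd F" and u: "u \<in> terms F"
  shows "node_tensor F u = (\<lambda>_. val F u)"
proof -
  have "card (nodes F) \<noteq> 0"
    using wf u unfolding wf_tdd_def by auto
  then obtain N where "card (nodes F) = Suc N"
    using not0_implies_Suc by blast
  with u show ?thesis
    unfolding node_tensor_def by simp
qed

lemma node_tensor_nonterminal:
  assumes wf: "wf_tdd F" and u: "u \<in> nonterms F"
  shows "node_tensor F u = (\<lambda>c. wlo F u * idx_bar_tensor (idx F u) c * node_tensor F (lo F u) c
    + whi F u * idx_tensor (idx F u) c * node_tensor F (hi F u) c)"
proof -
  have "u \<in> nodes F" "u \<notin> terms F"
    using u unfolding nonterms_def by blast+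
  then have lt: "card (descendants F u) < card (nodes F)"
    using card_descendants_less_card_nodes[OF wf] by blast
  then obtain N where N: "card (nodes F) = Suc N"
    using not0_implies_Suc by (metis less_nat_zero_code)
  have "card (descendants F c) < N" if "(u, c) \<in> edges F" for c
    using card_descendants_edge_less[OF wf that] lt N by linarith
  then have "phi_fuel N F c = node_tensor F c" if "(u, c) \<in> edges F" "c \<in> nodes F" for c
    unfolding node_tensor_def N
    using phi_fuel_eq_if_descendants_less[OF wf] that by (meson less_SucI)
  then have "phi_fuel N F (lo F u) = node_tensor F (lo F u)"
    "phi_fuel N F (hi F u) = node_tensor F (hi F u)"
    using lo_in_edges[OF u] hi_in_edges[OF u] lo_in_nodes[OF wf u] hi_in_nodes[OF wf u]
    by blast+
  with \<open>u \<notin> terms F\<close> show ?thesis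
    unfolding node_tensor_def N by simp
qed

definition rescaled :: "('i, 'v) tdd \<Rightarrow> ('v \<Rightarrow> complex) \<Rightarrow> ('i, 'v) tdd \<Rightarrow> bool" where
  "rescaled F s G \<longleftrightarrow>
     nodes G = nodes F \<and> terms G = terms F \<and> root G = root F
     \<and> idx G = idx F \<and> lo G = lo F \<and> hi G = hi F
     \<and> (\<forall>u \<in> terms F. val F u = s u * val G u)
     \<and> (\<forall>u \<in> nonterms F. s u * wlo G u = wlo F u * s (lo F u)
                         \<and> s u * whi G u = whi F u * s (hi F u))
     \<and> wroot G = wroot F * s (root F)"

lemma rescaled_wf_tdd: "rescaled F s G \<Longrightarrow> wf_tdd F \<Longrightarrow> wf_tdd G"
  unfolding rescaled_def wf_tdd_def edges_def nonterms_def by simp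

lemma node_tensor_rescaled:
  assumes resc: "rescaled F s G" and wf: "wf_tdd F" and u: "u \<in> nodes F"
  shows "node_tensor F u = (\<lambda>c. s u * node_tensor G u c)"
  using wf u
proof (induction u rule: tdd_node_induct)
  case (terminal u)
  then have "u \<in> terms G" and "val F u = s u * val G u"
    using resc unfolding rescaled_def by auto
  then show ?case
    using node_tensor_terminal[OF wf terminal] node_tensor_terminal[OF rescaled_wf_tdd[OF resc wf]]
    by simp
next
  case (inner u)
  have G: "u \<in> nonterms G" "idx G = idx F" "lo G = lo F" "hi G = hi F"
    and wlo_eq: "s u * wlo G u = wlo F u * s (lo F u)"
    and whi_eq: "s u * whi G u = whi F u * s (hi F u)"
    using resc inner.hyps unfolding rescaled_def nonterms_def by auto
  show ?case
  proof
    fix c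
    have "node_tensor F u c
      = wlo F u * idx_bar_tensor (idx F u) c * (s (lo F u) * node_tensor G (lo F u) c)
        + whi F u * idx_tensor (idx F u) c * (s (hi F u) * node_tensor G (hi F u) c)"
      unfolding node_tensor_nonterminal[OF wf inner.hyps] inner.IH ..
    also have "\<dots> = s u * wlo G u * idx_bar_tensor (idx F u) c * node_tensor G (lo F u) c
        + s u * whi G u * idx_tensor (idx F u) c * node_tensor G (hi F u) c"
      unfolding wlo_eq whi_eq by (simp add: algebra_simps)
    also have "\<dots> = s u * node_tensor G u c"
      unfolding node_tensor_nonterminal[OF rescaled_wf_tdd[OF resc wf] G(1)] G(2-4)
      by (simp add: algebra_simps)
    finally show "node_tensor F u c = s u * node_tensor G u c" .
  qed
qed

lemma rep_rescaled:
  assumes "rescaled F s G" and "wf_tdd F"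
  shows "rep G = rep F"
proof -
  have "root G = root F" and "wroot G = wroot F * s (root F)"
    using assms(1) unfolding rescaled_def by auto
  with node_tensor_rescaled[OF assms] show ?thesis
    using assms(2) unfolding rep_def wf_tdd_def by (auto simp: fun_eq_iff)
qed

lemma nr1_rescaled:
  assumes "nr1_applicable F v"
  shows "rescaled F (\<lambda>u. if u = v then val F v else 1) (nr1 F v)"
  using assms unfolding rescaled_def nr1_applicable_def nr1_def nonterms_def by auto

lemma nr2_weight_nonzero:
  assumes wf: "wf_tdd F" and v: "v \<in> nonterms F" and nonzero: "node_tensor F v \<noteq> (\<lambda>_. 0)"
  shows "nr2_weight F v \<noteq> 0"
proof
  assume w: "nr2_weight F v = 0"
  have "wlo F v = 0 \<or> node_tensor F (lo F v) = (\<lambda>_. 0)"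
    and "whi F v = 0 \<or> node_tensor F (hi F v) = (\<lambda>_. 0)"
    using w unfolding nr2_weight_def by (auto split: if_splits)
  then have "node_tensor F v = (\<lambda>_. 0)"
    unfolding node_tensor_nonterminal[OF wf v] by auto
  with nonzero show False ..
qed

lemma nr2_rescaled:
  assumes "v \<in> nonterms F" and "nr2_weight F v \<noteq> 0"
  shows "rescaled F (\<lambda>u. if u = v then nr2_weight F v else 1) (nr2 F v)"
  using assms unfolding rescaled_def nr2_def nonterms_def by (auto simp: Let_def)

lemma normal_tensor_const: "normal_tensor (\<lambda>_. c) \<longleftrightarrow> c = 0 \<or> c = 1"
  by (simp add: normal_tensor_def fun_eq_iff)

lemma normal_tdd_iff_no_rule_applicable:
  assumes wf: "wf_tdd F"
  shows "normal_tdd F \<longleftrightarrow> \<not> (\<exists>v. nr1_applicable F v \<or> nr2_applicable F v)"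
proof
  assume "normal_tdd F"
  then have normal: "normal_tensor (node_tensor F v)" if "v \<in> nodes F" for v
    using that unfolding normal_tdd_def by blast
  have "\<not> nr1_applicable F v" for v
    using normal[of v] wf node_tensor_terminal[OF wf]
    unfolding nr1_applicable_def wf_tdd_def by (auto simp: normal_tensor_const)
  moreover have "\<not> nr2_applicable F v" for v
    using normal[of v] unfolding nr2_applicable_def nonterms_def by blast
  ultimately show "\<not> (\<exists>v. nr1_applicable F v \<or> nr2_applicable F v)" by blast
next
  assume none: "\<not> (\<exists>v. nr1_applicable F v \<or> nr2_applicable F v)"
  have "normal_tensor (node_tensor F u)" if "u \<in> nodes F" for u
    using wf that
  proof (induction u rule: tdd_node_induct)
    case (terminal u)
    then show ?case
      using none node_tensor_terminal[OF wf terminal]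
      unfolding nr1_applicable_def by (auto simp: normal_tensor_const)
  next
    case (inner u)
    then show ?case
      using none unfolding nr2_applicable_def normal_tensor_def by blast
  qed
  then show "normal_tdd F"
    unfolding normal_tdd_def by blast
qed

theorem theorem1:
  fixes F :: "('i::{finite,linorder}, 'v) tdd"
  assumes "wf_tdd F"
  shows "(\<forall>v. nr1_applicable F v \<longrightarrow> rep (nr1 F v) = rep F)
       \<and> (\<forall>v. nr2_applicable F v \<longrightarrow> rep (nr2 F v) = rep F)
       \<and> (normal_tdd F \<longleftrightarrow> \<not> (\<exists>v. nr1_applicable F v \<or> nr2_applicable F v))"
proof (intro conjI allI impI)
  show "rep (nr1 F v) = rep F" if "nr1_applicable F v" for v
    using rep_rescaled[OF nr1_rescaled[OF that] assms] .
  show "rep (nr2 F v) = rep F" if "nr2_applicable F v" for v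
  proof -
    have "v \<in> nonterms F" and "node_tensor F v \<noteq> (\<lambda>_. 0)"
      using that unfolding nr2_applicable_def by blast+
    then have "nr2_weight F v \<noteq> 0"
      using nr2_weight_nonzero[OF assms] by blast
    then show ?thesis
      using rep_rescaled[OF nr2_rescaled[OF \<open>v \<in> nonterms F\<close>] assms] by blast
  qed
  show "normal_tdd F \<longleftrightarrow> \<not> (\<exists>v. nr1_applicable F v \<or> nr2_applicable F v)"
    using normal_tdd_iff_no_rule_applicable[OF assms] .
qed

end
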